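(* Let $\widetilde\nabla$ be the canonical snm-connection on $\mathbb R^3$ determined by $\mathsf C=\partial_z$, and let $M$ be the rotational surface $\psi(s,t)=(x(s)\cos t,x(s)\sin t,z(s))$, $s\in I$, $t\in\mathbb R$, with $I$ an open interval, $x>0$, $x'^2+z'^2=1$. If the generating curve $s\mapsto(x(s),z(s))$ is an arc of a circle, i.e. $(x(s),z(s))=(c_1,c_2)+r(\cos(s/r),\sin(s/r))$ for constants $c_1,c_2\in\mathbb R$, $r>0$, then the sectional curvature $K$ of $M$ with respect to $\widetilde\nabla$ is not constant.
   Context: Let $\langle\cdot,\cdot\rangle$ be the Euclidean metric on $\mathbb R^3$ and $\widetilde\nabla^0$ its Levi-Civita connection (the ordinary directional derivative). Given a smooth vector field $\mathsf C$ on $\mathbb R^3$, the semi-symmetric non-metric connection (snm-connection) determined by $\mathsf C$ is $\widetilde\nabla_XY=\widetilde\nabla^0_XY+\langle \mathsf C,Y\rangle X$. Its curvature tensor is $\widetilde R(X,Y)Z=\widetilde\nabla_X\widetilde\nabla_YZ-\widetilde\nabla_Y\widetilde\nabla_XZ-\widetilde\nabla_{[X,Y]}Z$. For a surface $M$ immersed in $\mathbb R^3$, the induced connection is $\nabla_XY=(\widetilde\nabla_XY)^{\top}$ (tangential component), with curvature tensor $R$ defined by the same formula, and the sectional curvature of $M$ with respect to $\widetilde\nabla$ at $p$ is $K(p)=\frac12\big(\langle R(e_1,e_2)e_2,e_1\rangle+\langle R(e_2,e_1)e_1,e_2\rangle\big)$ for an orthonormal basis $\{e_1,e_2\}$ of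 $T_pM$. *)

theory Defs
  imports "HOL-Analysis.Analysis"
begin

text \<open>A parametrized surface psi : (s,t) |-> psi s t in R^3. Vector fields along the
surface (tangent or ambient-valued) are functions of the parameters (s,t).\<close>

type_synonym field3 = "real \<Rightarrow> real \<Rightarrow> real^3"

definition d_s :: "field3 \<Rightarrow> field3" where
  "d_s Y s t = vector_derivative (\<lambda>u. Y u t) (at s)"

definition d_t :: "field3 \<Rightarrow> field3" where
  "d_t Y s t = vector_derivative (\<lambda>u. Y s u) (at t)"

text \<open>Coefficients (a,b) of the tangential part a psi_s + b psi_t of a vector V at (s,t),
 obtained from the first fundamental form (Gram system).\<close>
definition tcoef :: "field3 \<Rightarrow> real^3 \<Rightarrow> real \<Rightarrow> real \<Rightarrow> real \<times> real" where
  "tcoef psi V s t =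
     (let Ps = d_s psi s t; Pt = d_t psi s t;
          E = Ps \<bullet> Ps; F = Ps \<bullet> Pt; G = Pt \<bullet> Pt;
          p = V \<bullet> Ps; q = V \<bullet> Pt; W = E * G - F\<^sup>2
      in ((G * p - F * q) / W, (E * q - F * p) / W))"

definition tang :: "field3 \<Rightarrow> field3 \<Rightarrow> field3" where
  "tang psi V s t = (let (a, b) = tcoef psi (V s t) s t
                     in a *\<^sub>R d_s psi s t + b *\<^sub>R d_t psi s t)"

definition dirD :: "field3 \<Rightarrow> field3 \<Rightarrow> field3 \<Rightarrow> field3" where
  "dirD psi X Y s t = (let (a, b) = tcoef psi (X s t) s t
                       in a *\<^sub>R d_s Y s t + b *\<^sub>R d_t Y s t)"

definition snm :: "(real^3 \<Rightarrow> real^3) \<Rightarrow> field3 \<Rightarrow> field3 \<Rightarrow> field3 \<Rightarrow> field3" where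
  "snm C psi X Y s t = dirD psi X Y s t + (C (psi s t) \<bullet> Y s t) *\<^sub>R X s t"

definition ind_conn :: "(real^3 \<Rightarrow> real^3) \<Rightarrow> field3 \<Rightarrow> field3 \<Rightarrow> field3 \<Rightarrow> field3" where
  "ind_conn C psi X Y = tang psi (snm C psi X Y)"

definition lie :: "field3 \<Rightarrow> field3 \<Rightarrow> field3 \<Rightarrow> field3" where
  "lie psi X Y s t = dirD psi X Y s t - dirD psi Y X s t"

definition ind_curv :: "(real^3 \<Rightarrow> real^3) \<Rightarrow> field3 \<Rightarrow> field3 \<Rightarrow> field3 \<Rightarrow> field3 \<Rightarrow> field3" where
  "ind_curv C psi X Y Z s t =
     ind_conn C psi X (ind_conn C psi Y Z) s t
     - ind_conn C psi Y (ind_conn C psi X Z) s t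
     - ind_conn C psi (lie psi X Y) Z s t"

text \<open>Sectional curvature computed with the orthonormal frame (e1,e2).\<close>
definition sect_curv :: "(real^3 \<Rightarrow> real^3) \<Rightarrow> field3 \<Rightarrow> field3 \<Rightarrow> field3 \<Rightarrow> real \<Rightarrow> real \<Rightarrow> real" where
  "sect_curv C psi e1 e2 s t =
     (ind_curv C psi e1 e2 e2 s t \<bullet> e1 s t + ind_curv C psi e2 e1 e1 s t \<bullet> e2 s t) / 2"

definition rot_surf :: "(real \<Rightarrow> real) \<Rightarrow> (real \<Rightarrow> real) \<Rightarrow> field3" where
  "rot_surf x z s t = vector [x s * cos t, x s * sin t, z s]"

definition C_z :: "real^3 \<Rightarrow> real^3" where
  "C_z p = vector [0, 0, 1]"

end

theory Submission
  imports Defs "HOL-Computational_Algebra.Polynomial"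
begin

text \<open>For a rotational surface with unit-speed profile \<open>(x, z)\<close> the frame
  \<open>e\<^sub>1 = \<psi>\<^sub>s\<close>, \<open>e\<^sub>2 = \<psi>\<^sub>t / x\<close> is orthonormal and the rotational symmetry makes every
  covariant derivative explicit; the sectional curvature depends on \<open>s\<close> only and equals
  \<open>(-2x''/x - x'z'/x - z'' + z'\<^sup>2)/2\<close>. On the arc \<open>x = c\<^sub>1 + r cos \<theta>\<close>, \<open>z = c\<^sub>2 + r sin \<theta>\<close>,
  \<open>\<theta> = s/r\<close>, the equation \<open>K = k\<close> becomes \<open>A(cos \<theta>) + sin \<theta> B(cos \<theta>) = 0\<close> for real
  polynomials \<open>A\<close>, \<open>B\<close> with \<open>B = c\<^sub>1 + 2r X \<noteq> 0\<close>. Squaring away \<open>sin \<theta>\<close> gives a nonzero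
  polynomial vanishing at infinitely many values of \<open>cos \<theta>\<close>, a contradiction.\<close>

lemma vector3_inner [simp]:
  "(vector [a, b, c] :: real^3) \<bullet> vector [d, e, f] = a * d + b * e + c * f"
  by (simp add: inner_vec_def sum_3)

lemma vector3_scaleR [simp]: "k *\<^sub>R (vector [a, b, c] :: real^3) = vector [k * a, k * b, k * c]"
  by (auto simp: vec_eq_iff forall_3)

lemma vector3_add [simp]:
  "(vector [a, b, c] :: real^3) + vector [d, e, f] = vector [a + d, b + e, c + f]"
  by (auto simp: vec_eq_iff forall_3)

lemma vector3_uminus [simp]: "- (vector [a, b, c] :: real^3) = vector [- a, - b, - c]"
  by (auto simp: vec_eq_iff forall_3)

lemma cos_sin_scaled_add [simp]: "cos t * (cos t * a) + sin t * (sin t * a) = (a :: real)"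
  using sin_cos_squared_add3[of t] by (metis distrib_right mult.assoc mult_1_left)

lemma C_z_inner [simp]: "C_z p \<bullet> v = v $ 3"
  by (simp add: C_z_def inner_vec_def sum_3)

lemma has_vector_derivative_scaleR_const:
  "(c has_real_derivative c') (at s) \<Longrightarrow> ((\<lambda>u. c u *\<^sub>R v) has_vector_derivative c' *\<^sub>R v) (at s)"
  using has_vector_derivative_scaleR[OF _ has_vector_derivative_const, of c c' s UNIV v] by simp

lemma has_vector_derivative_vector3:
  assumes "(f has_real_derivative f') (at s)" "(g has_real_derivative g') (at s)"
    "(h has_real_derivative h') (at s)"
  shows "((\<lambda>u. vector [f u, g u, h u] :: real^3) has_vector_derivative vector [f', g', h']) (at s)"
proof -
  have split: "(vector [a, b, c] :: real^3)
      = a *\<^sub>R vector [1, 0, 0] + b *\<^sub>R vector [0, 1, 0] + c *\<^sub>R vector [0, 0, 1]" for a b c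
    by simp
  have "((\<lambda>u. f u *\<^sub>R vector [1, 0, 0] + g u *\<^sub>R vector [0, 1, 0] + h u *\<^sub>R vector [0, 0, 1])
      has_vector_derivative
        f' *\<^sub>R vector [1, 0, 0] + g' *\<^sub>R vector [0, 1, 0] + h' *\<^sub>R (vector [0, 0, 1] :: real^3))
      (at s)"
    by (intro has_vector_derivative_add has_vector_derivative_scaleR_const assms)
  then show ?thesis
    unfolding split[symmetric] .
qed

subsection \<open>Polynomials in \<open>cos\<close> and \<open>sin\<close>\<close>

lemma cos_not_symmetric_around:
  fixes a h :: real
  assumes "0 < h" "h < pi"
  shows "\<not> (cos (a + h) = cos a \<and> cos (a - h) = cos a)"
proof
  assume eq: "cos (a + h) = cos a \<and> cos (a - h) = cos a"
  have sin_h: "sin h > 0"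
    using assms sin_gt_zero by auto
  have "cos a * cos h - sin a * sin h = cos a" "cos a * cos h + sin a * sin h = cos a"
    using eq by (simp_all add: cos_add cos_diff)
  then have "sin a * sin h = 0"
    by linarith
  then have "sin a = 0"
    using sin_h by simp
  then have "cos a \<noteq> 0" and "cos a * cos h = cos a"
    using eq sin_cos_squared_add[of a] by (auto simp: cos_add)
  then have "cos h = 1"
    by simp
  then show False
    using sin_h sin_cos_squared_add[of h] by simp
qed

lemma infinite_cos_image_ball:
  fixes a e :: real
  assumes "0 < e" shows "infinite (cos ` ball a e)"
proof
  assume "finite (cos ` ball a e)"
  moreover have "connected (cos ` ball a e)"
    by (intro connected_continuous_image continuous_intros) auto
  moreover have "cos ` ball a e \<noteq> {}"
    using assms by simp
  ultimately obtain c where c: "cos ` ball a e = {c}"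
    using connected_finite_iff_sing by blast
  define h where "h = min (e / 2) 1"
  have "0 < h" "h < pi"
    using assms pi_gt3 by (auto simp: h_def)
  moreover have "a + h \<in> ball a e" "a - h \<in> ball a e" "a \<in> ball a e"
    using assms \<open>0 < h\<close> by (auto simp: h_def dist_real_def)
  then have "cos (a + h) = cos a \<and> cos (a - h) = cos a"
    using c by (metis imageI singletonD)
  ultimately show False
    using cos_not_symmetric_around by blast
qed

lemma poly_cos_vanishing_on_open:
  fixes p :: "real poly"
  assumes "open S" "S \<noteq> {}" "\<forall>\<theta>\<in>S. poly p (cos \<theta>) = 0"
  shows "p = 0"
proof (rule ccontr)
  assume "p \<noteq> 0"
  obtain a e where "0 < e" "ball a e \<subseteq> S"
    using assms(1,2) open_contains_ball by blast
  then have "cos ` ball a e \<subseteq> {u. poly p u = 0}"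
    using assms(3) by auto
  then show False
    using poly_roots_finite[OF \<open>p \<noteq> 0\<close>] infinite_cos_image_ball[OF \<open>0 < e\<close>]
      finite_subset by blast
qed

text \<open>Squaring \<open>A(cos \<theta>) = - sin \<theta> B(cos \<theta>)\<close> gives \<open>A\<^sup>2 = (1 - X\<^sup>2) B\<^sup>2\<close> at \<open>X = cos \<theta>\<close>;
  this polynomial identity forces \<open>B = 0\<close> because the right-hand side is negative
  for \<open>|X| > 1\<close> unless \<open>B\<close> vanishes there.\<close>

lemma poly_cos_sin_vanishing_on_open:
  fixes A B :: "real poly"
  assumes "open S" "S \<noteq> {}" "\<forall>\<theta>\<in>S. poly A (cos \<theta>) + sin \<theta> * poly B (cos \<theta>) = 0"
  shows "A = 0 \<and> B = 0"
proof -
  define P where "P = A * A - [:1, 0, -1:] * B * B"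
  have poly_P: "poly P u = (poly A u)\<^sup>2 + (u\<^sup>2 - 1) * (poly B u)\<^sup>2" for u
    by (simp add: P_def power2_eq_square algebra_simps)
  have "\<forall>\<theta>\<in>S. poly P (cos \<theta>) = 0"
  proof
    fix \<theta> assume "\<theta> \<in> S"
    then have A_eq: "poly A (cos \<theta>) = - (sin \<theta> * poly B (cos \<theta>))"
      using assms(3) by (simp add: eq_neg_iff_add_eq_0)
    show "poly P (cos \<theta>) = 0"
      unfolding poly_P A_eq power2_minus power_mult_distrib sin_squared_eq by (simp add: algebra_simps)
  qed
  then have "P = 0"
    using poly_cos_vanishing_on_open assms(1,2) by blast
  have "B = 0"
  proof (rule ccontr)
    assume "B \<noteq> 0"
    then have "\<not> {1<..} \<subseteq> {u. poly B u = 0}"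
      using poly_roots_finite infinite_Ioi finite_subset by blast
    then obtain u :: real where "1 < u" "poly B u \<noteq> 0"
      by auto
    then have "0 < (u\<^sup>2 - 1) * (poly B u)\<^sup>2"
      by (simp add: one_less_power)
    then have "poly P u > 0"
      unfolding poly_P by (simp add: add_nonneg_pos)
    then show False
      using \<open>P = 0\<close> by simp
  qed
  moreover have "A = 0"
    using assms \<open>B = 0\<close> poly_cos_vanishing_on_open[of S A] by simp
  ultimately show ?thesis
    by simp
qed

subsection \<open>Curvature of a rotational surface with unit-speed profile\<close>

locale unit_speed_profile =
  fixes x z x' x'' z' z'' :: "real \<Rightarrow> real" and I :: "real set"
  assumes open_I: "open I"
    and x_pos: "\<And>s. s \<in> I \<Longrightarrow> x s > 0"
    and x_deriv: "\<And>s. s \<in> I \<Longrightarrow> (x has_real_derivative x' s) (at s)"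
    and x'_deriv: "\<And>s. s \<in> I \<Longrightarrow> (x' has_real_derivative x'' s) (at s)"
    and z_deriv: "\<And>s. s \<in> I \<Longrightarrow> (z has_real_derivative z' s) (at s)"
    and z'_deriv: "\<And>s. s \<in> I \<Longrightarrow> (z' has_real_derivative z'' s) (at s)"
    and unit_speed: "\<And>s. s \<in> I \<Longrightarrow> (x' s)\<^sup>2 + (z' s)\<^sup>2 = 1"
begin

lemma acceleration_orthogonal:
  assumes "s \<in> I" shows "x' s * x'' s + z' s * z'' s = 0"
proof -
  have "((\<lambda>u. (x' u)\<^sup>2 + (z' u)\<^sup>2) has_real_derivative 2 * (x' s * x'' s + z' s * z'' s)) (at s)"
    using assms by (auto intro!: derivative_eq_intros x'_deriv z'_deriv)
  moreover have "((\<lambda>u. (x' u)\<^sup>2 + (z' u)\<^sup>2) has_real_derivative 0) (at s)"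
    using has_field_derivative_transform_within_open[OF DERIV_const open_I assms]
    by (simp add: unit_speed)
  ultimately show ?thesis
    using DERIV_unique by fastforce
qed

abbreviation "psi \<equiv> rot_surf x z"
abbreviation "e1 \<equiv> d_s psi"
abbreviation "e2 \<equiv> \<lambda>s t. (1 / x s) *\<^sub>R d_t psi s t"

definition "psi_s s t = (vector [x' s * cos t, x' s * sin t, z' s] :: real^3)"
definition "psi_ss s t = (vector [x'' s * cos t, x'' s * sin t, z'' s] :: real^3)"
definition "e_rot t = (vector [- sin t, cos t, 0] :: real^3)"
definition "e_rad t = (vector [cos t, sin t, 0] :: real^3)"

lemma e_rot_inner_self [simp]: "e_rot t \<bullet> e_rot t = 1"
  by (simp add: e_rot_def add.commute)

lemma e_rot_inner_psi_s [simp]: "e_rot t \<bullet> psi_s s t = 0"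
  by (simp add: e_rot_def psi_s_def algebra_simps)

lemma psi_s_inner_e_rot [simp]: "psi_s s t \<bullet> e_rot t = 0"
  by (simp add: inner_commute)

lemma e_rad_inner_psi_s [simp]: "e_rad t \<bullet> psi_s s t = x' s"
  by (simp add: e_rad_def psi_s_def algebra_simps)

lemma e_rad_inner_e_rot [simp]: "e_rad t \<bullet> e_rot t = 0"
  by (simp add: e_rad_def e_rot_def algebra_simps)

lemma e_rot_3 [simp]: "e_rot t $ 3 = 0"
  by (simp add: e_rot_def)

lemma psi_s_3 [simp]: "psi_s s t $ 3 = z' s"
  by (simp add: psi_s_def)

lemma psi_s_inner_self: "s \<in> I \<Longrightarrow> psi_s s t \<bullet> psi_s s t = 1"
  using unit_speed[of s] by (simp add: psi_s_def power2_eq_square algebra_simps)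

lemma psi_ss_inner_psi_s: "s \<in> I \<Longrightarrow> psi_ss s t \<bullet> psi_s s t = 0"
  using acceleration_orthogonal[of s] by (simp add: psi_ss_def psi_s_def algebra_simps)

lemma d_s_eq_local:
  assumes "s \<in> I" "\<And>u. u \<in> I \<Longrightarrow> F u t = G u" "(G has_vector_derivative D) (at s)"
  shows "d_s F s t = D"
  unfolding d_s_def
  by (rule vector_derivative_at has_vector_derivative_transform_within_open[OF assms(3) open_I
        assms(1)])+ (simp add: assms(2))

lemma d_t_eq:
  assumes "\<And>u. F s u = G u" "(G has_vector_derivative D) (at t)"
  shows "d_t F s t = D"
  unfolding d_t_def using assms by (metis ext vector_derivative_at)

lemma psi_s_has_derivative_s:
  "s \<in> I \<Longrightarrow> ((\<lambda>u. psi_s u t) has_vector_derivative psi_ss s t) (at s)"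
  unfolding psi_s_def psi_ss_def
  by (intro has_vector_derivative_vector3 DERIV_cmult_right x'_deriv z'_deriv)

lemma psi_s_has_derivative_t: "(psi_s s has_vector_derivative x' s *\<^sub>R e_rot t) (at t)"
proof -
  have "((\<lambda>u. vector [x' s * cos u, x' s * sin u, z' s] :: real^3) has_vector_derivative
      vector [x' s * - sin t, x' s * cos t, 0]) (at t)"
    by (intro has_vector_derivative_vector3 DERIV_cmult DERIV_sin DERIV_cos DERIV_const)
  then show ?thesis
    by (simp add: psi_s_def[abs_def] e_rot_def)
qed

lemma d_s_psi: "s \<in> I \<Longrightarrow> d_s psi s t = psi_s s t"
  unfolding d_s_def rot_surf_def psi_s_def
  by (intro vector_derivative_at has_vector_derivative_vector3 DERIV_cmult_right x_deriv z_deriv)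

lemma d_t_psi: "d_t psi s t = x s *\<^sub>R e_rot t"
proof -
  have "((\<lambda>u. vector [x s * cos u, x s * sin u, z s] :: real^3) has_vector_derivative
      vector [x s * - sin t, x s * cos t, 0]) (at t)"
    by (intro has_vector_derivative_vector3 DERIV_cmult DERIV_sin DERIV_cos DERIV_const)
  then show ?thesis
    unfolding d_t_def rot_surf_def e_rot_def by (simp add: vector_derivative_at)
qed

lemma e2_eq: "s \<in> I \<Longrightarrow> e2 s t = e_rot t"
  using x_pos[of s] by (simp add: d_t_psi)

text \<open>The metric is \<open>ds\<^sup>2 + x\<^sup>2 dt\<^sup>2\<close>, so projecting onto the tangent plane only needs
  the components along \<open>\<psi>\<^sub>s\<close> and \<open>e_rot\<close>.\<close>

lemma tcoef_psi:
  assumes "s \<in> I" shows "tcoef psi V s t = (V \<bullet> psi_s s t, (V \<bullet> e_rot t) / x s)"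
  using x_pos[OF assms] psi_s_inner_self[OF assms]
  by (simp add: tcoef_def Let_def d_s_psi[OF assms] d_t_psi power2_eq_square)

lemma tang_psi:
  "s \<in> I \<Longrightarrow> tang psi F s t = (F s t \<bullet> psi_s s t) *\<^sub>R psi_s s t + (F s t \<bullet> e_rot t) *\<^sub>R e_rot t"
  using x_pos[of s] by (simp add: tang_def tcoef_psi d_s_psi d_t_psi)

lemma ind_conn_inner_psi_s:
  "s \<in> I \<Longrightarrow> ind_conn C_z psi X Y s t \<bullet> psi_s s t = snm C_z psi X Y s t \<bullet> psi_s s t"
  by (simp add: ind_conn_def tang_psi psi_s_inner_self inner_add_left)

lemma ind_conn_inner_e_rot:
  "s \<in> I \<Longrightarrow> ind_conn C_z psi X Y s t \<bullet> e_rot t = snm C_z psi X Y s t \<bullet> e_rot t"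
  by (simp add: ind_conn_def tang_psi inner_add_left)

lemma dirD_e1: "s \<in> I \<Longrightarrow> dirD psi e1 Y s t = d_s Y s t"
  by (simp add: dirD_def tcoef_psi d_s_psi psi_s_inner_self)

lemma dirD_e2: "s \<in> I \<Longrightarrow> dirD psi e2 Y s t = (1 / x s) *\<^sub>R d_t Y s t"
  by (simp add: dirD_def tcoef_psi e2_eq inner_commute)

lemma d_s_e1: "s \<in> I \<Longrightarrow> d_s e1 s t = psi_ss s t"
  by (rule d_s_eq_local[where G = "\<lambda>u. psi_s u t"]) (auto simp: d_s_psi psi_s_has_derivative_s)

lemma d_t_e1: "s \<in> I \<Longrightarrow> d_t e1 s t = x' s *\<^sub>R e_rot t"
  by (rule d_t_eq[where G = "psi_s s", OF _ psi_s_has_derivative_t]) (simp add: d_s_psi)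

lemma d_s_e2: "s \<in> I \<Longrightarrow> d_s e2 s t = 0"
  by (rule d_s_eq_local[where G = "\<lambda>u. e_rot t"]) (auto simp: e2_eq)

lemma d_t_e2: "s \<in> I \<Longrightarrow> d_t e2 s t = - e_rad t"
  by (rule d_t_eq[where G = e_rot])
    (auto simp: e2_eq e_rot_def[abs_def] e_rad_def
      intro!: has_vector_derivative_vector3 derivative_eq_intros)

lemma ind_conn_e2_e2: "s \<in> I \<Longrightarrow> ind_conn C_z psi e2 e2 s t = (- x' s / x s) *\<^sub>R psi_s s t"
  by (simp add: ind_conn_def tang_psi snm_def dirD_e2 d_t_e2 e2_eq)

lemma ind_conn_e1_e2: "s \<in> I \<Longrightarrow> ind_conn C_z psi e1 e2 s t = 0"
  by (simp add: ind_conn_def tang_psi snm_def dirD_e1 d_s_e2 e2_eq)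

lemma ind_conn_e1_e1: "s \<in> I \<Longrightarrow> ind_conn C_z psi e1 e1 s t = z' s *\<^sub>R psi_s s t"
  by (simp add: ind_conn_def tang_psi snm_def dirD_e1 d_s_e1 d_s_psi inner_add_left
      psi_s_inner_self psi_ss_inner_psi_s) (simp add: psi_ss_def e_rot_def algebra_simps)

lemma ind_conn_e2_e1: "s \<in> I \<Longrightarrow> ind_conn C_z psi e2 e1 s t = (x' s / x s + z' s) *\<^sub>R e_rot t"
  by (simp add: ind_conn_def tang_psi snm_def dirD_e2 d_t_e1 d_s_psi e2_eq algebra_simps)

lemma lie_e1_e2: "s \<in> I \<Longrightarrow> lie psi e1 e2 s t = (- x' s / x s) *\<^sub>R e_rot t"
  by (simp add: lie_def dirD_e1 dirD_e2 d_s_e2 d_t_e1)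

lemma lie_e2_e1: "s \<in> I \<Longrightarrow> lie psi e2 e1 s t = (x' s / x s) *\<^sub>R e_rot t"
  by (simp add: lie_def dirD_e1 dirD_e2 d_s_e2 d_t_e1)

lemma ind_curv_e1_e2_e2_inner_e1:
  assumes "s \<in> I"
  shows "ind_curv C_z psi e1 e2 e2 s t \<bullet> e1 s t = - x'' s / x s - x' s * z' s / x s"
proof -
  have x_nonzero: "x s \<noteq> 0" using x_pos[OF assms] by simp
  have "((\<lambda>u. - x' u / x u) has_real_derivative - x'' s / x s + (x' s / x s)\<^sup>2) (at s)"
    using assms x_nonzero by (auto intro!: derivative_eq_intros x_deriv x'_deriv
        simp: power2_eq_square field_simps)
  then have "d_s (ind_conn C_z psi e2 e2) s t
      = (- x' s / x s) *\<^sub>R psi_ss s t + (- x'' s / x s + (x' s / x s)\<^sup>2) *\<^sub>R psi_s s t"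
    by (intro d_s_eq_local[OF assms, where G = "\<lambda>u. (- x' u / x u) *\<^sub>R psi_s u t"]
        has_vector_derivative_scaleR psi_s_has_derivative_s[OF assms] ind_conn_e2_e2)
  then have nabla_e1_e2_e2: "ind_conn C_z psi e1 (ind_conn C_z psi e2 e2) s t \<bullet> psi_s s t
      = - x'' s / x s + (x' s / x s)\<^sup>2 - x' s * z' s / x s"
    using assms by (simp add: ind_conn_inner_psi_s snm_def dirD_e1 ind_conn_e2_e2 d_s_psi
        inner_add_left inner_diff_left psi_s_inner_self psi_ss_inner_psi_s)
  have "d_t (ind_conn C_z psi e1 e2) s t = 0"
    by (rule d_t_eq[where G = "\<lambda>u. 0"]) (simp_all add: ind_conn_e1_e2 assms)
  then have nabla_e2_e1_e2: "ind_conn C_z psi e2 (ind_conn C_z psi e1 e2) s t = 0"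
    using assms by (simp add: ind_conn_def[of C_z psi e2] tang_psi snm_def dirD_e2 ind_conn_e1_e2)
  have nabla_lie_e2: "ind_conn C_z psi (lie psi e1 e2) e2 s t \<bullet> psi_s s t = (x' s / x s)\<^sup>2"
    using assms by (simp add: ind_conn_inner_psi_s snm_def dirD_def lie_e1_e2 tcoef_psi d_t_e2
        e2_eq power2_eq_square)
  show ?thesis
    using assms by (simp add: ind_curv_def inner_diff_left d_s_psi nabla_e1_e2_e2 nabla_e2_e1_e2
        nabla_lie_e2)
qed

lemma ind_curv_e2_e1_e1_inner_e2:
  assumes "s \<in> I"
  shows "ind_curv C_z psi e2 e1 e1 s t \<bullet> e2 s t = (z' s)\<^sup>2 - x'' s / x s - z'' s"
proof -
  have x_nonzero: "x s \<noteq> 0" using x_pos[OF assms] by simp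
  have "d_t (ind_conn C_z psi e1 e1) s t = (z' s * x' s) *\<^sub>R e_rot t"
    by (rule d_t_eq[where G = "\<lambda>u. z' s *\<^sub>R psi_s s u"])
      (use assms in \<open>auto simp: ind_conn_e1_e1
          intro!: derivative_eq_intros psi_s_has_derivative_t\<close>)
  then have nabla_e2_e1_e1: "ind_conn C_z psi e2 (ind_conn C_z psi e1 e1) s t \<bullet> e_rot t
      = z' s * x' s / x s + (z' s)\<^sup>2"
    using assms by (simp add: ind_conn_inner_e_rot snm_def dirD_e2 ind_conn_e1_e1 e2_eq
        inner_add_left power2_eq_square)
  have "((\<lambda>u. x' u / x u + z' u) has_real_derivative x'' s / x s - (x' s / x s)\<^sup>2 + z'' s)
      (at s)"
    using assms x_nonzero by (auto intro!: derivative_eq_intros x_deriv x'_deriv z'_deriv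
        simp: power2_eq_square field_simps)
  then have "d_s (ind_conn C_z psi e2 e1) s t = (x'' s / x s - (x' s / x s)\<^sup>2 + z'' s) *\<^sub>R e_rot t"
    by (intro d_s_eq_local[OF assms, where G = "\<lambda>u. (x' u / x u + z' u) *\<^sub>R e_rot t"]
        has_vector_derivative_scaleR_const ind_conn_e2_e1)
  then have nabla_e1_e2_e1: "ind_conn C_z psi e1 (ind_conn C_z psi e2 e1) s t \<bullet> e_rot t
      = x'' s / x s - (x' s / x s)\<^sup>2 + z'' s"
    using assms by (simp add: ind_conn_inner_e_rot snm_def dirD_e1 ind_conn_e2_e1)
  have nabla_lie_e1: "ind_conn C_z psi (lie psi e2 e1) e1 s t \<bullet> e_rot t
      = (x' s / x s)\<^sup>2 + z' s * x' s / x s"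
    using assms by (simp add: ind_conn_inner_e_rot snm_def dirD_def lie_e2_e1 tcoef_psi d_t_e1
        d_s_psi inner_add_left power2_eq_square)
  show ?thesis
    using assms by (simp add: ind_curv_def inner_diff_left e2_eq nabla_e2_e1_e1 nabla_e1_e2_e1
        nabla_lie_e1)
qed

lemma sect_curv_rot_surf:
  "s \<in> I \<Longrightarrow> sect_curv C_z psi e1 e2 s t
    = (- 2 * x'' s / x s - x' s * z' s / x s - z'' s + (z' s)\<^sup>2) / 2"
  unfolding sect_curv_def ind_curv_e1_e2_e2_inner_e1 ind_curv_e2_e1_e1_inner_e2 by simp

end

lemma sect_curv_circle_profile_poly:
  fixes x z :: "real \<Rightarrow> real" and I :: "real set" and c1 c2 r k :: real
  assumes "open I" "\<forall>s\<in>I. x s > 0" "r > 0"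
    and circle: "\<forall>s\<in>I. x s = c1 + r * cos (s / r) \<and> z s = c2 + r * sin (s / r)"
    and "s \<in> I"
  shows "2 * r * x s * (sect_curv C_z (rot_surf x z) (d_s (rot_surf x z))
      (\<lambda>s t. (1 / x s) *\<^sub>R d_t (rot_surf x z) s t) s t - k)
    = poly [:- 2 * r * k * c1, 2 - 2 * r\<^sup>2 * k, r * c1, r\<^sup>2:] (cos (s / r))
      + sin (s / r) * poly [:c1, 2 * r:] (cos (s / r))"
proof -
  interpret unit_speed_profile x z "\<lambda>s. - sin (s / r)" "\<lambda>s. - cos (s / r) / r"
    "\<lambda>s. cos (s / r)" "\<lambda>s. - sin (s / r) / r" I
  proof
    fix s assume "s \<in> I"
    have "((\<lambda>u. c1 + r * cos (u / r)) has_real_derivative - sin (s / r)) (at s)"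
      "((\<lambda>u. c2 + r * sin (u / r)) has_real_derivative cos (s / r)) (at s)"
      using \<open>r > 0\<close> by (auto intro!: derivative_eq_intros)
    then show "(x has_real_derivative - sin (s / r)) (at s)"
      "(z has_real_derivative cos (s / r)) (at s)"
      using has_field_derivative_transform_within_open[OF _ \<open>open I\<close> \<open>s \<in> I\<close>] circle by auto
    show "((\<lambda>s. - sin (s / r)) has_real_derivative - cos (s / r) / r) (at s)"
      "((\<lambda>s. cos (s / r)) has_real_derivative - sin (s / r) / r) (at s)"
      using \<open>r > 0\<close> by (auto intro!: derivative_eq_intros)
  qed (use assms in auto)
  have "x s > 0" and x_eq: "x s = c1 + r * cos (s / r)"
    using assms by auto
  have "2 * r * x s * (sect_curv C_z psi e1 e2 s t - k)
      = 2 * cos (s / r) + r * sin (s / r) * cos (s / r) + sin (s / r) * x s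
        + r * (cos (s / r))\<^sup>2 * x s - 2 * r * k * x s"
    using \<open>r > 0\<close> \<open>x s > 0\<close>
    by (simp add: sect_curv_rot_surf[OF \<open>s \<in> I\<close>] field_simps power2_eq_square)
  also have "\<dots> = poly [:- 2 * r * k * c1, 2 - 2 * r\<^sup>2 * k, r * c1, r\<^sup>2:] (cos (s / r))
      + sin (s / r) * poly [:c1, 2 * r:] (cos (s / r))"
    unfolding x_eq by (simp add: algebra_simps power2_eq_square)
  finally show ?thesis .
qed

theorem theorem4p4:
  fixes x z :: "real \<Rightarrow> real" and I :: "real set" and c1 c2 r :: real
  assumes "open I" and "is_interval I" and "I \<noteq> {}"
    and "\<forall>s\<in>I. x s > 0"
    and "\<forall>s\<in>I. (deriv x s)\<^sup>2 + (deriv z s)\<^sup>2 = 1"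
    and "r > 0"
    and "\<forall>s\<in>I. x s = c1 + r * cos (s / r) \<and> z s = c2 + r * sin (s / r)"
  shows "\<not> (\<exists>k. \<forall>s\<in>I. \<forall>t. sect_curv C_z (rot_surf x z)
            (d_s (rot_surf x z))
            (\<lambda>s t. (1 / x s) *\<^sub>R d_t (rot_surf x z) s t) s t = k)"
proof (intro notI, elim exE)
  fix k assume K: "\<forall>s\<in>I. \<forall>t. sect_curv C_z (rot_surf x z) (d_s (rot_surf x z))
      (\<lambda>s t. (1 / x s) *\<^sub>R d_t (rot_surf x z) s t) s t = k"
  obtain s0 where "s0 \<in> I"
    using \<open>I \<noteq> {}\<close> by blast
  define S where "S = (\<lambda>\<theta>. r * \<theta>) -` I"
  have "open S"
    unfolding S_def using \<open>open I\<close> by (intro continuous_open_vimage) (auto intro: continuous_intros)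
  moreover have "s0 / r \<in> S"
    using \<open>s0 \<in> I\<close> \<open>r > 0\<close> by (simp add: S_def)
  moreover have "\<forall>\<theta>\<in>S. poly [:- 2 * r * k * c1, 2 - 2 * r\<^sup>2 * k, r * c1, r\<^sup>2:] (cos \<theta>)
      + sin \<theta> * poly [:c1, 2 * r:] (cos \<theta>) = 0"
    using sect_curv_circle_profile_poly[OF assms(1,4,6,7), where k = k and t = 0] K \<open>r > 0\<close>
    by (fastforce simp: S_def)
  ultimately have "[:c1, 2 * r:] = 0"
    using poly_cos_sin_vanishing_on_open by blast
  then show False
    using \<open>r > 0\<close> by simp
qed

end
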